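(* Let $G$ be a countable residually finite group, $r>1$ an integer, and let $\eta\in\{1,\dots,r\}^G$ and $(\Gamma_n)_{n\ge1}$ be as constructed below. Then $(\Gamma_n)_{n\ge1}$ is a period structure for $\eta$; in particular each $\Gamma_n$ is an essential group of periods of $\eta$.
   Context: Setting: $(\Gamma_i)_{i\ge1}$ is a strictly decreasing sequence of finite index normal subgroups of $G$ with $\bigcap_i\Gamma_i=\{1_G\}$; put $\Gamma_0=G$. $(D_i)_{i\ge0}$ are finite subsets of $G$ with $D_0=\{1_G\}$, $D_i$ containing exactly one element of each coset of $\Gamma_i$, $1_G\in D_i\subseteq D_{i+1}$, $G=\bigcup_iD_i$, and $D_j=\bigcup_{v\in D_j\cap\Gamma_i}vD_i$ for $j>i\ge1$; also $[G:\Gamma_i]\ge3$ and $[\Gamma_i:\Gamma_{i+1}]\ge3$. Let $\Sigma=\{1,\dots,r\}$ and for $m\ge0$ let $\alpha_m\in\Sigma$ with $\alpha_m\equiv m\pmod r$. Put $J(0)=\{1_G\}$ and $J(m)=D_m\setminus\bigcup_{i=0}^{m-1}J(i)\Gamma_{i+1}$ for $m\ge1$; the sets $J(m)\Gamma_{m+1}$ ($m\ge0$) partition $G$, and $\eta(hg)=\alpha_{m+1}$ for $h\in J(m)$, $g\in\Gamma_{m+1}$. Shift: $\sigma^gx(h)=x(g^{-1}h)$. $\mathrm{Per}(x,\Gamma,\alpha)=\{g: x(\gamma g)=\alpha\ \forall\gamma\in\Gamma\}$, $\mathrm{Per}(x,\Gamma)=\bigcup_\alpha\mathrm{Per}(x,\Gamma,\alpha)$.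 A finite index $\Gamma$ is a group of periods of $\eta$ if $\mathrm{Per}(\eta,\Gamma)\ne\emptyset$, essential if $\mathrm{Per}(\eta,\Gamma,\alpha)\subseteq\mathrm{Per}(\sigma^g\eta,\Gamma,\alpha)$ for every $\alpha\in\Sigma$ implies $g\in\Gamma$. A period structure is a nested sequence of essential groups of periods $(\Gamma_n)$ with $G=\bigcup_n\mathrm{Per}(\eta,\Gamma_n)$. *)

theory Defs
  imports "HOL-Algebra.Algebra"
begin

definition residually_finite :: "('a, 'b) monoid_scheme \<Rightarrow> bool" where
  "residually_finite G \<longleftrightarrow>
     (\<forall>g \<in> carrier G. g \<noteq> \<one>\<^bsub>G\<^esub> \<longrightarrow>
        (\<exists>H. H \<lhd> G \<and> finite (rcosets\<^bsub>G\<^esub> H) \<and> g \<notin> H))"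

definition Sigma :: "nat \<Rightarrow> nat set" where
  "Sigma r = {1..r}"

definition alpha :: "nat \<Rightarrow> nat \<Rightarrow> nat" where
  "alpha r m = (if m mod r = 0 then r else m mod r)"

primrec Jlist :: "('a, 'b) monoid_scheme \<Rightarrow> (nat \<Rightarrow> 'a set) \<Rightarrow> (nat \<Rightarrow> 'a set) \<Rightarrow> nat \<Rightarrow> 'a set list" where
  "Jlist G \<Gamma> D 0 = [{\<one>\<^bsub>G\<^esub>}]"
| "Jlist G \<Gamma> D (Suc m) = Jlist G \<Gamma> D m @
     [D (Suc m) - (\<Union>i\<le>m. (Jlist G \<Gamma> D m ! i) <#>\<^bsub>G\<^esub> \<Gamma> (Suc i))]"

definition J :: "('a, 'b) monoid_scheme \<Rightarrow> (nat \<Rightarrow> 'a set) \<Rightarrow> (nat \<Rightarrow> 'a set) \<Rightarrow> nat \<Rightarrow> 'a set" where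
  "J G \<Gamma> D m = Jlist G \<Gamma> D m ! m"

definition eta :: "('a, 'b) monoid_scheme \<Rightarrow> (nat \<Rightarrow> 'a set) \<Rightarrow> (nat \<Rightarrow> 'a set) \<Rightarrow> nat \<Rightarrow> 'a \<Rightarrow> nat" where
  "eta G \<Gamma> D r x = (THE a. \<exists>m. \<exists>h \<in> J G \<Gamma> D m. \<exists>g \<in> \<Gamma> (Suc m).
       x = h \<otimes>\<^bsub>G\<^esub> g \<and> a = alpha r (Suc m))"

definition shift :: "('a, 'b) monoid_scheme \<Rightarrow> 'a \<Rightarrow> ('a \<Rightarrow> 'c) \<Rightarrow> 'a \<Rightarrow> 'c" where
  "shift G g x = (\<lambda>h. x (inv\<^bsub>G\<^esub> g \<otimes>\<^bsub>G\<^esub> h))"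

definition Per :: "('a, 'b) monoid_scheme \<Rightarrow> ('a \<Rightarrow> 'c) \<Rightarrow> 'a set \<Rightarrow> 'c \<Rightarrow> 'a set" where
  "Per G x H a = {g \<in> carrier G. \<forall>\<gamma> \<in> H. x (\<gamma> \<otimes>\<^bsub>G\<^esub> g) = a}"

definition Per_all :: "('a, 'b) monoid_scheme \<Rightarrow> 'c set \<Rightarrow> ('a \<Rightarrow> 'c) \<Rightarrow> 'a set \<Rightarrow> 'a set" where
  "Per_all G \<Sigma> x H = (\<Union>a \<in> \<Sigma>. Per G x H a)"

definition group_of_periods :: "('a, 'b) monoid_scheme \<Rightarrow> 'c set \<Rightarrow> ('a \<Rightarrow> 'c) \<Rightarrow> 'a set \<Rightarrow> bool" where
  "group_of_periods G \<Sigma> x H \<longleftrightarrow>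
     subgroup H G \<and> finite (rcosets\<^bsub>G\<^esub> H) \<and> Per_all G \<Sigma> x H \<noteq> {}"

definition essential_group_of_periods :: "('a, 'b) monoid_scheme \<Rightarrow> 'c set \<Rightarrow> ('a \<Rightarrow> 'c) \<Rightarrow> 'a set \<Rightarrow> bool" where
  "essential_group_of_periods G \<Sigma> x H \<longleftrightarrow>
     group_of_periods G \<Sigma> x H \<and>
     (\<forall>g \<in> carrier G. (\<forall>a \<in> \<Sigma>. Per G x H a \<subseteq> Per G (shift G g x) H a) \<longrightarrow> g \<in> H)"

definition period_structure :: "('a, 'b) monoid_scheme \<Rightarrow> 'c set \<Rightarrow> ('a \<Rightarrow> 'c) \<Rightarrow> (nat \<Rightarrow> 'a set) \<Rightarrow> bool" where
  "period_structure G \<Sigma> x \<Gamma> \<longleftrightarrow>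
     (\<forall>n \<ge> 1. essential_group_of_periods G \<Sigma> x (\<Gamma> n)) \<and>
     (\<forall>n \<ge> 1. \<Gamma> (Suc n) \<subseteq> \<Gamma> n) \<and>
     carrier G = (\<Union>n \<in> {1..}. Per_all G \<Sigma> x (\<Gamma> n))"

end

theory Submission
  imports Defs
begin

text \<open>The sets \<open>J(m)\<Gamma>\<^sub>m\<^sub>+\<^sub>1\<close> (the layers) partition \<open>G\<close>, and \<open>\<eta>\<close> equals \<open>\<alpha>\<^sub>m\<^sub>+\<^sub>1\<close> on
  the \<open>m\<close>-th layer. For \<open>m < n\<close> the \<open>m\<close>-th layer is a union of \<open>\<Gamma>\<^sub>n\<close>-cosets, whereas every
  \<open>\<Gamma>\<^sub>n\<close>-coset of the remaining positions (the holes of level \<open>n\<close>) meets both layer \<open>n\<close> and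
  layer \<open>n + 1\<close>, since \<open>\<Gamma>\<^sub>n\<^sub>+\<^sub>1\<close> is a proper subgroup of \<open>\<Gamma>\<^sub>n\<close>. As \<open>\<alpha>\<^sub>n\<^sub>+\<^sub>1 \<noteq> \<alpha>\<^sub>n\<^sub>+\<^sub>2\<close>,
  the \<open>\<Gamma>\<^sub>n\<close>-periodic positions of \<open>\<eta>\<close> are exactly the first \<open>n\<close> layers.
  For essentiality, if \<open>g \<notin> \<Gamma>\<^sub>n\<close> let \<open>m < n\<close> be least with \<open>g\<inverse> \<notin> \<Gamma>\<^sub>m\<^sub>+\<^sub>1\<close>. Then \<open>g\<inverse>\<close> moves a suitable
  point of layer \<open>m\<close>, which lies in \<open>Per(\<eta>, \<Gamma>\<^sub>n, \<alpha>\<^sub>m\<^sub>+\<^sub>1)\<close>, into the holes of level \<open>n\<close>;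
  hence that point is not in \<open>Per(\<sigma>\<^sup>g\<eta>, \<Gamma>\<^sub>n, \<alpha>\<^sub>m\<^sub>+\<^sub>1)\<close>.\<close>

lemma Jlist_length: "length (Jlist G \<Gamma> D m) = Suc m"
  by (induction m) auto

lemma Jlist_nth: "i \<le> m \<Longrightarrow> Jlist G \<Gamma> D m ! i = J G \<Gamma> D i"
  by (induction m arbitrary: i) (auto simp: J_def nth_append Jlist_length le_Suc_eq)

lemma J_Suc: "J G \<Gamma> D (Suc m) = D (Suc m) - (\<Union>i\<le>m. J G \<Gamma> D i <#>\<^bsub>G\<^esub> \<Gamma> (Suc i))"
proof -
  have "J G \<Gamma> D (Suc m) = D (Suc m) - (\<Union>i\<le>m. (Jlist G \<Gamma> D m ! i) <#>\<^bsub>G\<^esub> \<Gamma> (Suc i))"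
    by (simp add: J_def nth_append Jlist_length)
  then show ?thesis using Jlist_nth[of _ m G \<Gamma> D] by simp
qed

lemma alpha_in_Sigma: "r > 1 \<Longrightarrow> alpha r m \<in> Sigma r"
  unfolding alpha_def Sigma_def by auto

lemma alpha_Suc_neq: "r > 1 \<Longrightarrow> alpha r (Suc n) \<noteq> alpha r (Suc (Suc n))"
  unfolding alpha_def by (auto simp: mod_Suc split: if_splits)

context group
begin

lemma rcosets_carrier_self: "rcosets (carrier G) = {carrier G}"
proof -
  have "carrier G #> x = carrier G" if "x \<in> carrier G" for x
    using subgroup.rcos_const[OF subgroup_self is_group that] .
  then show ?thesis unfolding RCOSETS_def by auto
qed

lemma normal_mult_left_to_right:
  assumes "N \<lhd> G" "x \<in> carrier G" "\<gamma> \<in> N"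
  shows "\<exists>\<gamma>'\<in>N. \<gamma> \<otimes> x = x \<otimes> \<gamma>'"
proof -
  have "\<gamma> \<otimes> x \<in> N #> x" using assms(3) unfolding r_coset_def by blast
  then show ?thesis using normal.coset_eq[OF assms(1)] assms(2) unfolding l_coset_def by auto
qed

lemma Per_normal_iff:
  assumes "N \<lhd> G"
  shows "x \<in> Per G f N a \<longleftrightarrow> x \<in> carrier G \<and> (\<forall>\<gamma>\<in>N. f (x \<otimes> \<gamma>) = a)"
proof (cases "x \<in> carrier G")
  case True
  then have "N #> x = x <# N" using normal.coset_eq[OF assms] by blast
  then have "(\<forall>y\<in>N #> x. f y = a) \<longleftrightarrow> (\<forall>y\<in>x <# N. f y = a)"
    by simp
  then have "(\<forall>\<gamma>\<in>N. f (\<gamma> \<otimes> x) = a) \<longleftrightarrow> (\<forall>\<gamma>\<in>N. f (x \<otimes> \<gamma>) = a)"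
    unfolding r_coset_def l_coset_def by blast
  then show ?thesis unfolding Per_def by blast
qed (simp add: Per_def)

lemma Per_shift_iff:
  assumes N: "N \<lhd> G" and g: "g \<in> carrier G" and h: "h \<in> carrier G"
  shows "h \<in> Per G (shift G g f) N a \<longleftrightarrow> inv g \<otimes> h \<in> Per G f N a"
proof -
  have "shift G g f (h \<otimes> \<gamma>) = f (inv g \<otimes> h \<otimes> \<gamma>)" if "\<gamma> \<in> N" for \<gamma>
    using that g h normal_imp_subgroup[OF N] by (simp add: shift_def m_assoc subgroup.mem_carrier)
  then show ?thesis using N g h by (simp add: Per_normal_iff)
qed

lemma transversal_factor:
  assumes N: "N \<lhd> G" and T: "\<And>C. C \<in> rcosets N \<Longrightarrow> \<exists>!d. d \<in> T \<and> d \<in> C"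
    and x: "x \<in> carrier G"
  shows "\<exists>d\<in>T. \<exists>\<gamma>\<in>N. x = d \<otimes> \<gamma>"
proof -
  have sub: "subgroup N G" using N normal_imp_subgroup by blast
  have "N #> x \<in> rcosets N" using rcosetsI[OF subgroup.subset[OF sub] x] .
  then obtain d where "d \<in> T" "d \<in> N #> x" using T by blast
  moreover have "N #> x = x <# N" using normal.coset_eq[OF N] x by blast
  ultimately have "d \<in> T" "d \<in> x <# N" by auto
  then obtain \<gamma> where d: "d \<in> T" "\<gamma> \<in> N" "d = x \<otimes> \<gamma>" unfolding l_coset_def by blast
  then have "x = d \<otimes> inv \<gamma>" using x subgroup.mem_carrier[OF sub] by (simp add: m_assoc)
  then show ?thesis using d subgroup.m_inv_closed[OF sub] by blast
qed

lemma transversal_unique: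
  assumes N: "N \<lhd> G" and T: "\<And>C. C \<in> rcosets N \<Longrightarrow> \<exists>!d. d \<in> T \<and> d \<in> C"
    and d: "d \<in> T" "d \<in> carrier G" and d\<gamma>: "d \<otimes> \<gamma> \<in> T" and \<gamma>: "\<gamma> \<in> N"
  shows "\<gamma> = \<one>"
proof -
  have sub: "subgroup N G" using N normal_imp_subgroup by blast
  have "N #> d \<in> rcosets N" using rcosetsI[OF subgroup.subset[OF sub] d(2)] .
  moreover have "d \<in> N #> d" using rcos_self[OF d(2) sub] .
  moreover have "d \<otimes> \<gamma> \<in> N #> d"
    using normal.coset_eq[OF N] d(2) \<gamma> unfolding l_coset_def by blast
  ultimately have "d \<otimes> \<gamma> = d" using T d d\<gamma> by blast
  then show ?thesis using d(2) \<gamma> subgroup.mem_carrier[OF sub] by simp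
qed

end

locale toeplitz_construction = group G for G :: "('a, 'b) monoid_scheme" (structure) +
  fixes \<Gamma> D :: "nat \<Rightarrow> 'a set" and r :: nat
  assumes r_gt_1: "r > 1"
    and \<Gamma>_0: "\<Gamma> 0 = carrier G"
    and \<Gamma>_normal: "\<Gamma> i \<lhd> G"
    and \<Gamma>_Suc_psubset: "\<Gamma> (Suc i) \<subset> \<Gamma> i"
    and D_0: "D 0 = {\<one>}"
    and D_subset: "D i \<subseteq> carrier G"
    and D_transversal: "C \<in> rcosets (\<Gamma> i) \<Longrightarrow> \<exists>!d. d \<in> D i \<and> d \<in> C"
    and D_exhaust: "carrier G = (\<Union>i. D i)"
begin

abbreviation \<eta> :: "'a \<Rightarrow> nat" where "\<eta> \<equiv> eta G \<Gamma> D r"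

text \<open>The Toeplitz construction fills the positions of \<open>layer m\<close> with the symbol
  \<open>\<alpha>\<^sub>m\<^sub>+\<^sub>1\<close>; \<open>holes m\<close> are the positions still unfilled after \<open>m\<close> steps.\<close>

definition layer :: "nat \<Rightarrow> 'a set" where
  "layer m = J G \<Gamma> D m <#> \<Gamma> (Suc m)"

definition holes :: "nat \<Rightarrow> 'a set" where
  "holes m = carrier G - (\<Union>i<m. layer i)"

lemma \<Gamma>_subgroup: "subgroup (\<Gamma> i) G"
  using \<Gamma>_normal normal_imp_subgroup by blast

lemmas \<Gamma>_carrier = subgroup.mem_carrier[OF \<Gamma>_subgroup]
  and \<Gamma>_m_closed = subgroup.m_closed[OF \<Gamma>_subgroup]
  and \<Gamma>_inv_closed = subgroup.m_inv_closed[OF \<Gamma>_subgroup]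
  and \<Gamma>_one_closed = subgroup.one_closed[OF \<Gamma>_subgroup]

lemma \<Gamma>_antimono: "i \<le> j \<Longrightarrow> \<Gamma> j \<subseteq> \<Gamma> i"
  using lift_Suc_antimono_le[of \<Gamma>] \<Gamma>_Suc_psubset by blast

lemma J_eq_D_Int_holes: "J G \<Gamma> D m = D m \<inter> holes m"
proof (cases m)
  case 0
  then show ?thesis using D_0 by (simp add: J_def holes_def)
next
  case (Suc k)
  then have "J G \<Gamma> D m = D m - (\<Union>i<m. layer i)"
    by (simp only: J_Suc layer_def lessThan_Suc_atMost)
  then show ?thesis using D_subset[of m] unfolding holes_def by blast
qed

lemma J_carrier: "d \<in> J G \<Gamma> D m \<Longrightarrow> d \<in> carrier G"
  using J_eq_D_Int_holes D_subset by blast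

lemma holes_carrier: "x \<in> holes m \<Longrightarrow> x \<in> carrier G"
  by (simp add: holes_def)

lemma layer_iff: "x \<in> layer m \<longleftrightarrow> (\<exists>d\<in>J G \<Gamma> D m. \<exists>\<gamma>\<in>\<Gamma> (Suc m). x = d \<otimes> \<gamma>)"
  unfolding layer_def set_mult_def by blast

lemma layer_mult_closed: "x \<in> layer i \<Longrightarrow> \<gamma> \<in> \<Gamma> (Suc i) \<Longrightarrow> x \<otimes> \<gamma> \<in> layer i"
proof -
  assume x: "x \<in> layer i" and \<gamma>: "\<gamma> \<in> \<Gamma> (Suc i)"
  then obtain d \<gamma>' where d: "d \<in> J G \<Gamma> D i" "\<gamma>' \<in> \<Gamma> (Suc i)" "x = d \<otimes> \<gamma>'"
    using layer_iff by blast
  then have "x \<otimes> \<gamma> = d \<otimes> (\<gamma>' \<otimes> \<gamma>)" using \<gamma> J_carrier \<Gamma>_carrier by (simp add: m_assoc)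
  then show ?thesis using d \<gamma> \<Gamma>_m_closed layer_iff by blast
qed

lemma holes_mult_closed:
  assumes x: "x \<in> holes m" and \<gamma>: "\<gamma> \<in> \<Gamma> m"
  shows "x \<otimes> \<gamma> \<in> holes m"
proof -
  have "x \<otimes> \<gamma> \<notin> layer i" if i: "i < m" for i
  proof
    assume "x \<otimes> \<gamma> \<in> layer i"
    moreover have "inv \<gamma> \<in> \<Gamma> (Suc i)" using \<Gamma>_inv_closed[OF \<gamma>] \<Gamma>_antimono[of "Suc i" m] i by auto
    ultimately have "x \<otimes> \<gamma> \<otimes> inv \<gamma> \<in> layer i" by (rule layer_mult_closed)
    then have "x \<in> layer i" using holes_carrier[OF x] \<Gamma>_carrier[OF \<gamma>] by (simp add: m_assoc)
    then show False using x i unfolding holes_def by blast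
  qed
  moreover have "x \<otimes> \<gamma> \<in> carrier G" using holes_carrier[OF x] \<Gamma>_carrier[OF \<gamma>] by simp
  ultimately show ?thesis unfolding holes_def by blast
qed

lemma holes_factor: "x \<in> holes m \<Longrightarrow> \<exists>d\<in>J G \<Gamma> D m. \<exists>\<gamma>\<in>\<Gamma> m. x = d \<otimes> \<gamma>"
proof -
  assume x: "x \<in> holes m"
  then have "x \<in> carrier G" by (rule holes_carrier)
  then obtain d \<gamma> where d: "d \<in> D m" "\<gamma> \<in> \<Gamma> m" "x = d \<otimes> \<gamma>"
    using transversal_factor[OF \<Gamma>_normal D_transversal] by blast
  moreover have "d \<in> carrier G" using d(1) D_subset by blast
  ultimately have "d = x \<otimes> inv \<gamma>" using \<Gamma>_carrier by (simp add: m_assoc)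
  then have "d \<in> holes m" using holes_mult_closed[OF x \<Gamma>_inv_closed[OF d(2)]] by simp
  then show ?thesis using d J_eq_D_Int_holes by blast
qed

lemma J_mult_mem_layer_iff:
  assumes d: "d \<in> J G \<Gamma> D m" and \<gamma>: "\<gamma> \<in> \<Gamma> m"
  shows "d \<otimes> \<gamma> \<in> layer m \<longleftrightarrow> \<gamma> \<in> \<Gamma> (Suc m)"
proof
  assume "d \<otimes> \<gamma> \<in> layer m"
  then obtain d' \<gamma>' where d': "d' \<in> J G \<Gamma> D m" "\<gamma>' \<in> \<Gamma> (Suc m)" "d \<otimes> \<gamma> = d' \<otimes> \<gamma>'"
    using layer_iff by blast
  have \<gamma>'_m: "\<gamma>' \<in> \<Gamma> m" using d'(2) \<Gamma>_antimono[of m "Suc m"] by auto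
  have carr: "d \<in> carrier G" "d' \<in> carrier G" "\<gamma> \<in> carrier G" "\<gamma>' \<in> carrier G"
    using d d'(1) \<gamma> \<gamma>'_m J_carrier \<Gamma>_carrier by auto
  have "d' = d' \<otimes> \<gamma>' \<otimes> inv \<gamma>'" using carr by (simp add: m_assoc)
  also have "\<dots> = d \<otimes> \<gamma> \<otimes> inv \<gamma>'" by (simp only: d'(3))
  also have "\<dots> = d \<otimes> (\<gamma> \<otimes> inv \<gamma>')" using carr by (simp add: m_assoc)
  finally have "d' = d \<otimes> (\<gamma> \<otimes> inv \<gamma>')" .
  moreover have "d \<in> D m" "d' \<in> D m" using d d'(1) J_eq_D_Int_holes by auto
  moreover have "\<gamma> \<otimes> inv \<gamma>' \<in> \<Gamma> m" using \<gamma> \<gamma>'_m \<Gamma>_m_closed \<Gamma>_inv_closed by blast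
  ultimately have "\<gamma> \<otimes> inv \<gamma>' = \<one>"
    using transversal_unique[OF \<Gamma>_normal D_transversal _ J_carrier[OF d]] by simp
  then have "\<gamma> = \<gamma>'" using \<gamma> \<gamma>'_m \<Gamma>_carrier inv_solve_right'[of \<one> \<gamma> \<gamma>'] by simp
  then show "\<gamma> \<in> \<Gamma> (Suc m)" using d'(2) by simp
next
  assume "\<gamma> \<in> \<Gamma> (Suc m)"
  then show "d \<otimes> \<gamma> \<in> layer m" unfolding layer_iff using d by blast
qed

lemma layer_subset_holes: "layer m \<subseteq> holes m"
proof
  fix x assume "x \<in> layer m"
  then obtain d \<gamma> where d: "d \<in> J G \<Gamma> D m" "\<gamma> \<in> \<Gamma> (Suc m)" "x = d \<otimes> \<gamma>"
    using layer_iff by blast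
  have "d \<in> holes m" using d(1) J_eq_D_Int_holes by blast
  moreover have "\<gamma> \<in> \<Gamma> m" using d(2) \<Gamma>_antimono[of m "Suc m"] by auto
  ultimately show "x \<in> holes m" using holes_mult_closed d(3) by simp
qed

lemma holes_Suc: "holes (Suc m) = holes m - layer m"
  unfolding holes_def lessThan_Suc by blast

lemma layer_disjoint: "i < m \<Longrightarrow> layer i \<inter> layer m = {}"
  using layer_subset_holes holes_def by blast

lemma layer_cover: "x \<in> carrier G \<Longrightarrow> \<exists>m. x \<in> layer m"
proof -
  assume x: "x \<in> carrier G"
  then obtain n where n: "x \<in> D n" using D_exhaust by blast
  show ?thesis
  proof (cases "x \<in> holes n")
    case True
    then have "x \<in> J G \<Gamma> D n" using n J_eq_D_Int_holes by blast
    then have "x \<otimes> \<one> \<in> layer n" unfolding layer_iff using \<Gamma>_one_closed by blast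
    then show ?thesis using x by auto
  next
    case False
    then show ?thesis using x unfolding holes_def by blast
  qed
qed

lemma eta_layer:
  assumes x: "x \<in> layer m"
  shows "\<eta> x = alpha r (Suc m)"
  unfolding eta_def
proof (rule the_equality)
  show "\<exists>m'. \<exists>d\<in>J G \<Gamma> D m'. \<exists>\<gamma>\<in>\<Gamma> (Suc m'). x = d \<otimes> \<gamma> \<and> alpha r (Suc m) = alpha r (Suc m')"
    using x layer_iff by blast
next
  fix a assume "\<exists>m'. \<exists>d\<in>J G \<Gamma> D m'. \<exists>\<gamma>\<in>\<Gamma> (Suc m'). x = d \<otimes> \<gamma> \<and> a = alpha r (Suc m')"
  then obtain m' where m': "x \<in> layer m'" "a = alpha r (Suc m')" using layer_iff by blast
  have "m' = m"
    using layer_disjoint[of m m'] layer_disjoint[of m' m] x m'(1)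
    by (cases m m' rule: linorder_cases) auto
  then show "a = alpha r (Suc m)" using m'(2) by simp
qed

lemma holes_coset_meets_layer: "x \<in> holes m \<Longrightarrow> \<exists>\<gamma>\<in>\<Gamma> m. x \<otimes> \<gamma> \<in> layer m"
proof -
  assume "x \<in> holes m"
  then obtain d \<gamma> where d: "d \<in> J G \<Gamma> D m" "\<gamma> \<in> \<Gamma> m" "x = d \<otimes> \<gamma>"
    using holes_factor by blast
  then have "x \<otimes> inv \<gamma> = d \<otimes> \<one>" using J_carrier \<Gamma>_carrier by (simp add: m_assoc)
  moreover have "d \<otimes> \<one> \<in> layer m" using J_mult_mem_layer_iff[OF d(1)] \<Gamma>_one_closed by blast
  ultimately show ?thesis using \<Gamma>_inv_closed[OF d(2)] by (intro bexI[of _ "inv \<gamma>"]) simp_all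
qed

lemma holes_coset_meets_holes_Suc: "x \<in> holes m \<Longrightarrow> \<exists>\<gamma>\<in>\<Gamma> m. x \<otimes> \<gamma> \<in> holes (Suc m)"
proof -
  assume x: "x \<in> holes m"
  then obtain d \<gamma> where d: "d \<in> J G \<Gamma> D m" "\<gamma> \<in> \<Gamma> m" "x = d \<otimes> \<gamma>"
    using holes_factor by blast
  obtain w where w: "w \<in> \<Gamma> m" "w \<notin> \<Gamma> (Suc m)" using \<Gamma>_Suc_psubset by blast
  have carr: "d \<in> carrier G" "\<gamma> \<in> carrier G" "w \<in> carrier G"
    using d w J_carrier \<Gamma>_carrier by auto
  then have "x \<otimes> (inv \<gamma> \<otimes> w) = d \<otimes> (\<gamma> \<otimes> (inv \<gamma> \<otimes> w))" using d(3) by (simp add: m_assoc)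
  also have "\<dots> = d \<otimes> w" using carr by (simp add: m_assoc[symmetric])
  finally have eq: "x \<otimes> (inv \<gamma> \<otimes> w) = d \<otimes> w" .
  have \<delta>: "inv \<gamma> \<otimes> w \<in> \<Gamma> m" using d(2) w(1) \<Gamma>_inv_closed \<Gamma>_m_closed by blast
  have "d \<otimes> w \<in> holes m" using holes_mult_closed[OF x \<delta>] eq by simp
  moreover have "d \<otimes> w \<notin> layer m" using J_mult_mem_layer_iff d(1) w by blast
  ultimately show ?thesis using \<delta> eq unfolding holes_Suc by (intro bexI[of _ "inv \<gamma> \<otimes> w"]) simp_all
qed

lemma holes_coset_meets_holes: "m \<le> n \<Longrightarrow> x \<in> holes m \<Longrightarrow> \<exists>\<gamma>\<in>\<Gamma> m. x \<otimes> \<gamma> \<in> holes n"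
proof (induction n rule: dec_induct)
  case base
  then show ?case using holes_carrier \<Gamma>_one_closed by (intro bexI[of _ \<one>]) simp_all
next
  case (step n)
  then obtain \<gamma> where \<gamma>: "\<gamma> \<in> \<Gamma> m" "x \<otimes> \<gamma> \<in> holes n" by blast
  then obtain \<gamma>' where \<gamma>': "\<gamma>' \<in> \<Gamma> n" "x \<otimes> \<gamma> \<otimes> \<gamma>' \<in> holes (Suc n)"
    using holes_coset_meets_holes_Suc by blast
  have "x \<otimes> \<gamma> \<otimes> \<gamma>' = x \<otimes> (\<gamma> \<otimes> \<gamma>')"
    using holes_carrier[OF step.prems] \<gamma> \<gamma>' \<Gamma>_carrier by (simp add: m_assoc)
  moreover have "\<gamma> \<otimes> \<gamma>' \<in> \<Gamma> m"
    using \<Gamma>_m_closed[OF \<gamma>(1)] \<gamma>'(1) \<Gamma>_antimono[OF step(1)] by blast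
  ultimately show ?case using \<gamma>' by metis
qed

lemma J_nonempty: "J G \<Gamma> D m \<noteq> {}"
proof -
  have "\<one> \<in> holes 0" by (simp add: holes_def)
  then obtain x where "x \<in> holes m" using holes_coset_meets_holes[of 0 m] by blast
  then show ?thesis using holes_factor by blast
qed

lemma layer_subset_Per: "m < n \<Longrightarrow> layer m \<subseteq> Per G \<eta> (\<Gamma> n) (alpha r (Suc m))"
proof
  fix x assume mn: "m < n" and x: "x \<in> layer m"
  have "\<Gamma> n \<subseteq> \<Gamma> (Suc m)" using \<Gamma>_antimono mn by simp
  then have "\<forall>\<gamma>\<in>\<Gamma> n. \<eta> (x \<otimes> \<gamma>) = alpha r (Suc m)"
    using layer_mult_closed[OF x] eta_layer by blast
  moreover have "x \<in> carrier G" using x layer_subset_holes holes_carrier by blast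
  ultimately show "x \<in> Per G \<eta> (\<Gamma> n) (alpha r (Suc m))" by (simp add: Per_normal_iff[OF \<Gamma>_normal])
qed

lemma holes_disjoint_Per: "x \<in> holes n \<Longrightarrow> x \<notin> Per G \<eta> (\<Gamma> n) a"
proof
  assume x: "x \<in> holes n" and per: "x \<in> Per G \<eta> (\<Gamma> n) a"
  have per_x: "\<eta> (x \<otimes> \<gamma>) = a" if "\<gamma> \<in> \<Gamma> n" for \<gamma>
    using per that unfolding Per_normal_iff[OF \<Gamma>_normal] by blast
  obtain \<gamma>\<^sub>1 where \<gamma>\<^sub>1: "\<gamma>\<^sub>1 \<in> \<Gamma> n" "x \<otimes> \<gamma>\<^sub>1 \<in> layer n"
    using holes_coset_meets_layer[OF x] by blast
  obtain \<gamma>\<^sub>2 where \<gamma>\<^sub>2: "\<gamma>\<^sub>2 \<in> \<Gamma> n" "x \<otimes> \<gamma>\<^sub>2 \<in> holes (Suc n)"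
    using holes_coset_meets_holes_Suc[OF x] by blast
  obtain \<gamma>\<^sub>3 where \<gamma>\<^sub>3: "\<gamma>\<^sub>3 \<in> \<Gamma> (Suc n)" "x \<otimes> \<gamma>\<^sub>2 \<otimes> \<gamma>\<^sub>3 \<in> layer (Suc n)"
    using holes_coset_meets_layer[OF \<gamma>\<^sub>2(2)] by blast
  have "\<gamma>\<^sub>3 \<in> \<Gamma> n" using \<gamma>\<^sub>3(1) \<Gamma>_antimono[of n "Suc n"] by auto
  then have "\<gamma>\<^sub>2 \<otimes> \<gamma>\<^sub>3 \<in> \<Gamma> n" by (rule \<Gamma>_m_closed[OF \<gamma>\<^sub>2(1)])
  have "alpha r (Suc (Suc n)) = \<eta> (x \<otimes> \<gamma>\<^sub>2 \<otimes> \<gamma>\<^sub>3)" using eta_layer[OF \<gamma>\<^sub>3(2)] by (rule sym)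
  also have "\<dots> = \<eta> (x \<otimes> (\<gamma>\<^sub>2 \<otimes> \<gamma>\<^sub>3))"
    using holes_carrier[OF x] \<Gamma>_carrier[OF \<gamma>\<^sub>2(1)] \<Gamma>_carrier[OF \<gamma>\<^sub>3(1)] by (simp add: m_assoc)
  also have "\<dots> = a" by (rule per_x) fact
  also have "\<dots> = alpha r (Suc n)" using per_x[OF \<gamma>\<^sub>1(1)] eta_layer[OF \<gamma>\<^sub>1(2)] by simp
  finally show False using alpha_Suc_neq[OF r_gt_1, of n] by argo
qed

lemma Per_all_eq_Union_layer: "Per_all G (Sigma r) \<eta> (\<Gamma> n) = (\<Union>m<n. layer m)"
proof
  show "Per_all G (Sigma r) \<eta> (\<Gamma> n) \<subseteq> (\<Union>m<n. layer m)"
  proof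
    fix x assume "x \<in> Per_all G (Sigma r) \<eta> (\<Gamma> n)"
    then obtain a where x: "x \<in> Per G \<eta> (\<Gamma> n) a" unfolding Per_all_def by blast
    then have "x \<notin> holes n" using holes_disjoint_Per by blast
    moreover have "x \<in> carrier G" using x unfolding Per_def by blast
    ultimately show "x \<in> (\<Union>m<n. layer m)" unfolding holes_def by blast
  qed
next
  show "(\<Union>m<n. layer m) \<subseteq> Per_all G (Sigma r) \<eta> (\<Gamma> n)"
  proof
    fix x assume "x \<in> (\<Union>m<n. layer m)"
    then obtain m where "m < n" "x \<in> layer m" by blast
    then have "x \<in> Per G \<eta> (\<Gamma> n) (alpha r (Suc m))" using layer_subset_Per by blast
    then show "x \<in> Per_all G (Sigma r) \<eta> (\<Gamma> n)"
      unfolding Per_all_def using alpha_in_Sigma[OF r_gt_1] by blast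
  qed
qed

lemma layer_translate_into_holes:
  assumes mn: "m < n" and k: "k \<in> \<Gamma> m" "k \<notin> \<Gamma> (Suc m)"
  shows "\<exists>h\<in>layer m. k \<otimes> h \<in> holes n"
proof -
  obtain d where d: "d \<in> J G \<Gamma> D m" using J_nonempty by blast
  have dc: "d \<in> carrier G" using J_carrier[OF d] .
  obtain c where c: "c \<in> \<Gamma> m" "k \<otimes> d = d \<otimes> c"
    using normal_mult_left_to_right[OF \<Gamma>_normal dc k(1)] by blast
  have "c \<notin> \<Gamma> (Suc m)"
  proof
    assume "c \<in> \<Gamma> (Suc m)"
    then have "d \<otimes> c \<otimes> inv d \<in> \<Gamma> (Suc m)" using normal.inv_op_closed2[OF \<Gamma>_normal dc] by blast
    moreover have "d \<otimes> c \<otimes> inv d = k"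
      using inv_solve_right'[of k "d \<otimes> c" d] c dc \<Gamma>_carrier[OF c(1)] \<Gamma>_carrier[OF k(1)] by simp
    ultimately show False using k(2) by simp
  qed
  then have "k \<otimes> d \<notin> layer m" using J_mult_mem_layer_iff[OF d c(1)] c(2) by simp
  moreover have "k \<otimes> d \<in> holes m"
    using holes_mult_closed[OF _ c(1), of d] d J_eq_D_Int_holes c(2) by simp
  ultimately have "k \<otimes> d \<in> holes (Suc m)" unfolding holes_Suc by blast
  then obtain \<gamma> where \<gamma>: "\<gamma> \<in> \<Gamma> (Suc m)" "k \<otimes> d \<otimes> \<gamma> \<in> holes n"
    using holes_coset_meets_holes[of "Suc m" n] mn by auto
  have "d \<otimes> \<gamma> \<in> layer m" unfolding layer_iff using d \<gamma>(1) by blast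
  moreover have "k \<otimes> (d \<otimes> \<gamma>) \<in> holes n"
    using \<gamma>(2) \<Gamma>_carrier[OF k(1)] dc \<Gamma>_carrier[OF \<gamma>(1)] by (simp add: m_assoc)
  ultimately show ?thesis by blast
qed

lemma mem_\<Gamma>_if_Per_subset_Per_shift:
  assumes g: "g \<in> carrier G"
    and per: "\<forall>a\<in>Sigma r. Per G \<eta> (\<Gamma> n) a \<subseteq> Per G (shift G g \<eta>) (\<Gamma> n) a"
  shows "g \<in> \<Gamma> n"
proof -
  have "inv g \<in> \<Gamma> m" if "m \<le> n" for m
    using that
  proof (induction m)
    case 0
    then show ?case using g \<Gamma>_0 by simp
  next
    case (Suc m)
    then have mn: "m < n" and g_m: "inv g \<in> \<Gamma> m" by auto
    show ?case
    proof (rule ccontr)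
      assume "inv g \<notin> \<Gamma> (Suc m)"
      then obtain h where h: "h \<in> layer m" "inv g \<otimes> h \<in> holes n"
        using layer_translate_into_holes[OF mn g_m] by blast
      have "h \<in> Per G \<eta> (\<Gamma> n) (alpha r (Suc m))" using layer_subset_Per[OF mn] h(1) by blast
      then have "h \<in> Per G (shift G g \<eta>) (\<Gamma> n) (alpha r (Suc m))"
        using per alpha_in_Sigma[OF r_gt_1] by blast
      moreover have "h \<in> carrier G" using h(1) layer_subset_holes holes_carrier by blast
      ultimately have "inv g \<otimes> h \<in> Per G \<eta> (\<Gamma> n) (alpha r (Suc m))"
        by (simp add: Per_shift_iff[OF \<Gamma>_normal g])
      then show False using holes_disjoint_Per[OF h(2)] by blast
    qed
  qed
  then have "inv (inv g) \<in> \<Gamma> n" using \<Gamma>_inv_closed by blast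
  then show ?thesis using g by simp
qed

lemma \<Gamma>_essential_group_of_periods:
  assumes "n \<ge> 1" and "finite (rcosets (\<Gamma> n))"
  shows "essential_group_of_periods G (Sigma r) \<eta> (\<Gamma> n)"
proof -
  have "\<one> \<in> layer 0" using J_mult_mem_layer_iff[of \<one> 0 \<one>] \<Gamma>_one_closed by (simp add: J_def)
  then have "\<one> \<in> (\<Union>m<n. layer m)" using assms(1) by (intro UN_I[of 0]) auto
  then have "\<one> \<in> Per_all G (Sigma r) \<eta> (\<Gamma> n)" unfolding Per_all_eq_Union_layer .
  then show ?thesis
    unfolding essential_group_of_periods_def group_of_periods_def
    using \<Gamma>_subgroup assms(2) mem_\<Gamma>_if_Per_subset_Per_shift by blast
qed

lemma period_structure_\<Gamma>:
  assumes "\<And>n. n \<ge> 1 \<Longrightarrow> finite (rcosets (\<Gamma> n))"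
  shows "period_structure G (Sigma r) \<eta> \<Gamma>"
proof -
  have "carrier G \<subseteq> (\<Union>n\<in>{1..}. Per_all G (Sigma r) \<eta> (\<Gamma> n))"
  proof
    fix x assume "x \<in> carrier G"
    then obtain m where "x \<in> layer m" using layer_cover by blast
    then have "x \<in> Per_all G (Sigma r) \<eta> (\<Gamma> (Suc m))" by (auto simp: Per_all_eq_Union_layer)
    then show "x \<in> (\<Union>n\<in>{1..}. Per_all G (Sigma r) \<eta> (\<Gamma> n))" by (intro UN_I[of "Suc m"]) auto
  qed
  moreover have "(\<Union>n\<in>{1..}. Per_all G (Sigma r) \<eta> (\<Gamma> n)) \<subseteq> carrier G"
    unfolding Per_all_def Per_def by blast
  moreover have "\<forall>n\<ge>1. essential_group_of_periods G (Sigma r) \<eta> (\<Gamma> n)"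
    using \<Gamma>_essential_group_of_periods assms by blast
  moreover have "\<forall>n. \<Gamma> (Suc n) \<subseteq> \<Gamma> n" using \<Gamma>_Suc_psubset by (simp add: psubset_imp_subset)
  ultimately show ?thesis unfolding period_structure_def by blast
qed

end

theorem proposition4p1:
  fixes G :: "('a, 'b) monoid_scheme"
    and \<Gamma> D :: "nat \<Rightarrow> 'a set"
    and r :: nat
  assumes grp: "group G"
    and cnt: "countable (carrier G)"
    and rf: "residually_finite G"
    and r_gt: "r > 1"
    and G0: "\<Gamma> 0 = carrier G"
    and normal: "\<And>i. i \<ge> 1 \<Longrightarrow> \<Gamma> i \<lhd> G"
    and fin_idx: "\<And>i. i \<ge> 1 \<Longrightarrow> finite (rcosets\<^bsub>G\<^esub> (\<Gamma> i))"
    and strict_dec: "\<And>i. i \<ge> 1 \<Longrightarrow> \<Gamma> (Suc i) \<subset> \<Gamma> i"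
    and trivial_int: "(\<Inter>i \<in> {1..}. \<Gamma> i) = {\<one>\<^bsub>G\<^esub>}"
    and D0: "D 0 = {\<one>\<^bsub>G\<^esub>}"
    and D_sub: "\<And>i. D i \<subseteq> carrier G"
    and D_fin: "\<And>i. finite (D i)"
    and D_transversal: "\<And>i C. C \<in> rcosets\<^bsub>G\<^esub> (\<Gamma> i) \<Longrightarrow> \<exists>!d. d \<in> D i \<and> d \<in> C"
    and D_one: "\<And>i. \<one>\<^bsub>G\<^esub> \<in> D i"
    and D_mono: "\<And>i. D i \<subseteq> D (Suc i)"
    and D_union: "carrier G = (\<Union>i. D i)"
    and D_struct: "\<And>i j. 1 \<le> i \<Longrightarrow> i < j \<Longrightarrow>
                     D j = (\<Union>v \<in> D j \<inter> \<Gamma> i. v <#\<^bsub>G\<^esub> D i)"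
    and idx_G: "\<And>i. i \<ge> 1 \<Longrightarrow> card (rcosets\<^bsub>G\<^esub> (\<Gamma> i)) \<ge> 3"
    and idx_step: "\<And>i. i \<ge> 1 \<Longrightarrow>
                     card (rcosets\<^bsub>G\<lparr>carrier := \<Gamma> i\<rparr>\<^esub> (\<Gamma> (Suc i))) \<ge> 3"
  shows "period_structure G (Sigma r) (eta G \<Gamma> D r) \<Gamma> \<and>
         (\<forall>n \<ge> 1. essential_group_of_periods G (Sigma r) (eta G \<Gamma> D r) (\<Gamma> n))"
proof -
  \<comment> \<open>Countability, residual finiteness, \<open>\<Inter>\<Gamma>\<^sub>i = {1}\<close> and the finer properties of the
    \<open>D\<^sub>i\<close> only serve to make the construction possible; of the index bounds only
    \<open>\<Gamma>\<^sub>1 \<noteq> G\<close> is needed.\<close>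
  interpret group G by (rule grp)
  have normal_all: "\<Gamma> i \<lhd> G" for i
    using normal G0 normal_self by (cases "i = 0") auto
  have "\<Gamma> 1 \<noteq> carrier G" using idx_G[of 1] rcosets_carrier_self by auto
  moreover have "\<Gamma> 1 \<subseteq> carrier G" using normal_imp_subgroup[OF normal_all] subgroup.subset by blast
  ultimately have psubset_all: "\<Gamma> (Suc i) \<subset> \<Gamma> i" for i
    using strict_dec G0 by (cases i) auto
  interpret toeplitz_construction G \<Gamma> D r
    by (intro toeplitz_construction.intro[OF grp] toeplitz_construction_axioms.intro)
      (use r_gt G0 normal_all psubset_all D0 D_sub D_transversal D_union in blast)+
  have "period_structure G (Sigma r) (eta G \<Gamma> D r) \<Gamma>"
    using period_structure_\<Gamma> fin_idx by blast
  then show ?thesis unfolding period_structure_def by blast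
qed

end
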